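(* Let $\alpha: I\to M$ be a unit-speed curve on an oriented surface $M\subset E^3$ with Darboux frame $\{T,V,U\}$ and curvatures $k_g,k_n,\tau_g$, with $k_g(s)\neq 0$ for all $s\in I$. Let $c_1$ be a nonzero real constant, let $\psi$ be an antiderivative of $k_n\tau_g/k_g$ on $I$, and let $$\gamma(s)=\alpha(s)+c_1e^{-\psi(s)}\Big(\frac{\tau_g(s)}{k_g(s)}T(s)+U(s)\Big),$$ and assume $\gamma$ is regular. Then $\gamma$ is a general helix if and only if $\alpha$ is a helical curve on $M$.
   Context: $M$ is an oriented surface in Euclidean 3-space $E^3$ and $\alpha:I\to M$ is a unit-speed curve with arc-length parameter $s$. Its Darboux frame $\{T,V,U\}$ consists of the unit tangent $T=\alpha'$, the unit surface normal $U$ of $M$ along $\alpha$, and $V=U\times T$; it satisfies $T'=k_gV+k_nU$, $V'=-k_gT+\tau_gU$, $U'=-k_nT-\tau_gV$, where $k_g,k_n,\tau_g$ are the geodesic curvature, normal curvature and geodesic torsion. A regular curve is a general helix if its unit tangent makes a constant angle with a fixed direction. $\alpha$ is a helical curve on $M$ if $\langle T,d\rangle$ is constant for some fixed unit vector $d$. *)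

theory Defs
  imports "HOL-Analysis.Analysis" "HOL-Analysis.Cross3"
begin

text \<open>U is the unit surface normal along alpha, T = alpha', V = U x T.\<close>
definition darboux_frame ::
  "(real \<Rightarrow> real^3) \<Rightarrow> (real \<Rightarrow> real^3) \<Rightarrow> (real \<Rightarrow> real^3) \<Rightarrow> (real \<Rightarrow> real^3)
   \<Rightarrow> (real \<Rightarrow> real) \<Rightarrow> (real \<Rightarrow> real) \<Rightarrow> (real \<Rightarrow> real) \<Rightarrow> real set \<Rightarrow> bool" where
  "darboux_frame \<alpha> T V U kg kn tg I \<longleftrightarrow>
     (\<forall>s\<in>I.
        (\<alpha> has_vector_derivative T s) (at s) \<and>
        norm (T s) = 1 \<and> norm (U s) = 1 \<and> T s \<bullet> U s = 0 \<and>
        V s = cross3 (U s) (T s) \<and>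
        (T has_vector_derivative (kg s *\<^sub>R V s + kn s *\<^sub>R U s)) (at s) \<and>
        (V has_vector_derivative (- kg s *\<^sub>R T s + tg s *\<^sub>R U s)) (at s) \<and>
        (U has_vector_derivative (- kn s *\<^sub>R T s - tg s *\<^sub>R V s)) (at s))"

definition regular_curve :: "(real \<Rightarrow> real^3) \<Rightarrow> real set \<Rightarrow> bool" where
  "regular_curve \<gamma> I \<longleftrightarrow>
     (\<forall>s\<in>I. \<gamma> differentiable (at s) \<and> vector_derivative \<gamma> (at s) \<noteq> 0)"

definition general_helix :: "(real \<Rightarrow> real^3) \<Rightarrow> real set \<Rightarrow> bool" where
  "general_helix \<gamma> I \<longleftrightarrow>
     (\<exists>d::real^3. norm d = 1 \<and> (\<exists>c. \<forall>s\<in>I.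
        (vector_derivative \<gamma> (at s) /\<^sub>R norm (vector_derivative \<gamma> (at s))) \<bullet> d = c))"

definition helical_curve :: "(real \<Rightarrow> real^3) \<Rightarrow> real set \<Rightarrow> bool" where
  "helical_curve T I \<longleftrightarrow> (\<exists>d::real^3. norm d = 1 \<and> (\<exists>c. \<forall>s\<in>I. T s \<bullet> d = c))"

end

theory Submission
  imports Defs
begin

text \<open>Write \<open>\<gamma> = \<alpha> + f (h T + U)\<close> with \<open>f = c\<^sub>1 e\<^sup>-\<^sup>\<psi>\<close> and \<open>h = \<tau>\<^sub>g / k\<^sub>g\<close>. The Darboux
  equations give \<open>\<gamma>' = \<rho> T + f (h k\<^sub>g - \<tau>\<^sub>g) V + (f' + f h k\<^sub>n) U\<close>, and both
  normal components vanish by the choice of f and h. So \<open>\<gamma>' = \<rho> T\<close> with \<open>\<rho> \<noteq> 0\<close> by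
  regularity, the unit tangent of \<gamma> is \<open>\<plusminus>T\<close>, and the two helix conditions coincide as soon
  as \<rho> has constant sign. The curvatures are only differentiable, so \<rho> need not be
  continuous; but \<open>\<rho> = (s + f h)' - f k\<^sub>n\<close> is a derivative up to a continuous term, hence a
  derivative on every compact subinterval, and Darboux's intermediate value theorem for
  derivatives makes its sign constant.\<close>

lemma derivative_sign_change_has_zero:
  fixes G g :: "real \<Rightarrow> real"
  assumes "a < b" and der: "\<forall>x\<in>{a..b}. (G has_real_derivative g x) (at x within {a..b})"
    and "g a > 0" and "g b < 0"
  shows "\<exists>x\<in>{a<..<b}. g x = 0"
proof -
  have "continuous_on {a..b} G"
    using der by (meson DERIV_continuous continuous_on_eq_continuous_within)
  then obtain m where m: "m \<in> {a..b}" and max: "\<forall>y\<in>{a..b}. G y \<le> G m"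
    using continuous_attains_sup[of "{a..b}" G] \<open>a < b\<close> by auto
  have "m \<noteq> a"
  proof
    assume "m = a"
    obtain d where "d > 0" "\<forall>h>0. a + h \<in> {a..b} \<longrightarrow> h < d \<longrightarrow> G a < G (a + h)"
      using has_real_derivative_pos_inc_right[OF der[rule_format, of a] \<open>g a > 0\<close>] \<open>a < b\<close>
      by auto
    then have "G a < G (a + min (d/2) (b - a))" using \<open>a < b\<close> by auto
    moreover have "G (a + min (d/2) (b - a)) \<le> G m" using max \<open>a < b\<close> \<open>d > 0\<close> by auto
    ultimately show False using \<open>m = a\<close> by simp
  qed
  moreover have "m \<noteq> b"
  proof
    assume "m = b"
    obtain d where "d > 0" "\<forall>h>0. b - h \<in> {a..b} \<longrightarrow> h < d \<longrightarrow> G b < G (b - h)"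
      using has_real_derivative_neg_dec_left[OF der[rule_format, of b] \<open>g b < 0\<close>] \<open>a < b\<close>
      by auto
    then have "G b < G (b - min (d/2) (b - a))" using \<open>a < b\<close> by auto
    moreover have "G (b - min (d/2) (b - a)) \<le> G m" using max \<open>a < b\<close> \<open>d > 0\<close> by auto
    ultimately show False using \<open>m = b\<close> by simp
  qed
  ultimately have m_inner: "m \<in> {a<..<b}" using m by auto
  then have "(G has_real_derivative g m) (at m)"
    using der[rule_format, of m] at_within_Icc_at[of a m b] by auto
  moreover have "\<forall>y. \<bar>m - y\<bar> < min (m - a) (b - m) \<longrightarrow> G y \<le> G m"
    using max by (auto simp: abs_if)
  ultimately have "g m = 0"
    using DERIV_local_max[of G "g m" m "min (m - a) (b - m)"] m_inner by auto
  with m_inner show ?thesis by blast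
qed

lemma derivative_nonzero_constant_sign:
  fixes g :: "real \<Rightarrow> real"
  assumes "is_interval I" and nonzero: "\<forall>s\<in>I. g s \<noteq> 0"
    and antideriv: "\<And>a b. a \<in> I \<Longrightarrow> b \<in> I \<Longrightarrow>
      \<exists>G. \<forall>x\<in>{a..b}. (G has_real_derivative g x) (at x within {a..b})"
  shows "(\<forall>s\<in>I. g s > 0) \<or> (\<forall>s\<in>I. g s < 0)"
proof (rule ccontr)
  assume "\<not> ?thesis"
  then obtain a b where a: "a \<in> I" "g a > 0" and b: "b \<in> I" "g b < 0"
    using nonzero by (metis linorder_neqE_linordered_idom)
  have between: "x \<in> I" if "min a b < x" "x < max a b" for x
    using \<open>is_interval I\<close> a b that unfolding is_interval_1 by (metis max_def min_def less_imp_le)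
  consider "a < b" | "b < a" using a b by fastforce
  then show False
  proof cases
    case 1
    obtain G where "\<forall>x\<in>{a..b}. (G has_real_derivative g x) (at x within {a..b})"
      using antideriv a b by blast
    then obtain x where "x \<in> {a<..<b}" "g x = 0"
      using derivative_sign_change_has_zero 1 a b by blast
    with between nonzero 1 show False by auto
  next
    case 2
    obtain G where "\<forall>x\<in>{b..a}. (G has_real_derivative g x) (at x within {b..a})"
      using antideriv a b by blast
    then have "\<forall>x\<in>{b..a}. ((\<lambda>x. - G x) has_real_derivative - g x) (at x within {b..a})"
      by (auto intro: derivative_intros)
    then obtain x where "x \<in> {b<..<a}" "g x = 0"
      using derivative_sign_change_has_zero[of b a] 2 a b by force
    with between nonzero 2 show False by auto
  qed
qed

lemma derivative_diff_continuous_has_antiderivative: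
  fixes F p :: "real \<Rightarrow> real"
  assumes "is_interval I" and "\<forall>x\<in>I. (F has_real_derivative F' x) (at x)"
    and "continuous_on I p" and "a \<in> I" and "b \<in> I"
  shows "\<exists>G. \<forall>x\<in>{a..b}. (G has_real_derivative F' x - p x) (at x within {a..b})"
proof -
  have sub: "{a..b} \<subseteq> I"
    using mem_is_interval_1_I[OF assms(1,4,5)] by auto
  then have "continuous_on {a..b} p"
    using assms(3) continuous_on_subset by blast
  then obtain P where P: "\<And>x. x \<in> {a..b} \<Longrightarrow> (P has_real_derivative p x) (at x within {a..b})"
    unfolding has_real_derivative_iff_has_vector_derivative by (rule antiderivative_continuous) blast
  have "((\<lambda>x. F x - P x) has_real_derivative F' x - p x) (at x within {a..b})"
    if "x \<in> {a..b}" for x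
  proof (rule DERIV_diff)
    show "(F has_real_derivative F' x) (at x within {a..b})"
      using assms(2) sub that by (blast intro: has_field_derivative_at_within)
  qed (use P that in blast)
  then show ?thesis by blast
qed

lemma darboux_frame_offset_curve_derivative:
  assumes "darboux_frame \<alpha> T V U kg kn tg I" and "s \<in> I"
    and "(f has_real_derivative f') (at s)" and "(h has_real_derivative h') (at s)"
  shows "((\<lambda>s. \<alpha> s + f s *\<^sub>R (h s *\<^sub>R T s + U s)) has_vector_derivative
      (1 + f' * h s + f s * h' - f s * kn s) *\<^sub>R T s
      + (f s * (h s * kg s - tg s)) *\<^sub>R V s + (f' + f s * h s * kn s) *\<^sub>R U s) (at s)"
proof -
  have "((\<lambda>s. \<alpha> s + f s *\<^sub>R (h s *\<^sub>R T s + U s)) has_vector_derivative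
      T s + (f s *\<^sub>R ((h s *\<^sub>R (kg s *\<^sub>R V s + kn s *\<^sub>R U s) + h' *\<^sub>R T s)
        + (- kn s *\<^sub>R T s - tg s *\<^sub>R V s)) + f' *\<^sub>R (h s *\<^sub>R T s + U s))) (at s)"
    using assms unfolding darboux_frame_def
    by (intro has_vector_derivative_add has_vector_derivative_scaleR) auto
  then show ?thesis
    by (simp add: vec_eq_iff algebra_simps)
qed

lemma general_helix_iff_helical_curve_if_tangent_parallel:
  assumes "\<forall>s\<in>I. vector_derivative \<gamma> (at s) = \<rho> s *\<^sub>R T s"
    and "\<forall>s\<in>I. norm (T s) = 1"
    and "(\<forall>s\<in>I. \<rho> s > 0) \<or> (\<forall>s\<in>I. \<rho> s < 0)"
  shows "general_helix \<gamma> I \<longleftrightarrow> helical_curve T I"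
proof -
  obtain e :: real where "e \<noteq> 0"
    and unit_tangent: "\<forall>s\<in>I. vector_derivative \<gamma> (at s) /\<^sub>R norm (vector_derivative \<gamma> (at s)) = e *\<^sub>R T s"
    using assms(3)
  proof
    assume "\<forall>s\<in>I. \<rho> s > 0"
    then show ?thesis using assms(1,2) by (intro that[of 1]) auto
  next
    assume "\<forall>s\<in>I. \<rho> s < 0"
    then show ?thesis using assms(1,2) by (intro that[of "-1"]) auto
  qed
  have "(\<exists>c. \<forall>s\<in>I. (e *\<^sub>R T s) \<bullet> d = c) \<longleftrightarrow> (\<exists>c. \<forall>s\<in>I. T s \<bullet> d = c)" for d
  proof
    assume "\<exists>c. \<forall>s\<in>I. (e *\<^sub>R T s) \<bullet> d = c"
    then obtain c where "\<forall>s\<in>I. e * (T s \<bullet> d) = c" by auto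
    then have "\<forall>s\<in>I. T s \<bullet> d = c / e" using \<open>e \<noteq> 0\<close> by (auto simp: field_simps)
    then show "\<exists>c. \<forall>s\<in>I. T s \<bullet> d = c" by blast
  next
    assume "\<exists>c. \<forall>s\<in>I. T s \<bullet> d = c"
    then obtain c where "\<forall>s\<in>I. T s \<bullet> d = c" by auto
    then have "\<forall>s\<in>I. (e *\<^sub>R T s) \<bullet> d = e * c" by simp
    then show "\<exists>c. \<forall>s\<in>I. (e *\<^sub>R T s) \<bullet> d = c" by blast
  qed
  then show ?thesis
    unfolding general_helix_def helical_curve_def by (simp add: unit_tangent cong: ball_cong)
qed

theorem theorem3p6:
  fixes \<alpha> T V U \<gamma> :: "real \<Rightarrow> real^3"
    and kg kn tg \<psi> :: "real \<Rightarrow> real" and c1 :: real and I :: "real set"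
  assumes "open I" and "is_interval I" and "I \<noteq> {}"
    and "darboux_frame \<alpha> T V U kg kn tg I"
    and "\<forall>s\<in>I. kg s \<noteq> 0"
    and "\<forall>s\<in>I. kg differentiable (at s) \<and> kn differentiable (at s) \<and> tg differentiable (at s)"
    and "c1 \<noteq> 0"
    and "\<forall>s\<in>I. (\<psi> has_real_derivative (kn s * tg s / kg s)) (at s)"
    and "\<forall>s\<in>I. \<gamma> s = \<alpha> s + (c1 * exp (- \<psi> s)) *\<^sub>R ((tg s / kg s) *\<^sub>R T s + U s)"
    and "regular_curve \<gamma> I"
  shows "general_helix \<gamma> I \<longleftrightarrow> helical_curve T I"
proof -
  define f where "f s = c1 * exp (- \<psi> s)" for s
  define h where "h s = tg s / kg s" for s
  define f' where "f' s = - f s * h s * kn s" for s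
  have df: "(f has_real_derivative f' s) (at s)" if "s \<in> I" for s
    using assms(8) that unfolding f_def f'_def h_def
    by (auto intro!: derivative_eq_intros)
  have "\<exists>D. (h has_real_derivative D) (at s)" if "s \<in> I" for s
    using assms(5,6) that unfolding h_def real_differentiable_def by (metis DERIV_divide)
  then obtain h' where dh: "\<And>s. s \<in> I \<Longrightarrow> (h has_real_derivative h' s) (at s)"
    by metis
  define \<rho> where "\<rho> s = 1 + f' s * h s + f s * h' s - f s * kn s" for s
  have "(\<gamma> has_vector_derivative \<rho> s *\<^sub>R T s) (at s)" if "s \<in> I" for s
  proof -
    have "h s * kg s - tg s = 0" "f' s + f s * h s * kn s = 0"
      using assms(5) that by (simp_all add: h_def f'_def)
    then have "((\<lambda>s. \<alpha> s + f s *\<^sub>R (h s *\<^sub>R T s + U s)) has_vector_derivative \<rho> s *\<^sub>R T s) (at s)"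
      using darboux_frame_offset_curve_derivative[OF assms(4) that df[OF that] dh[OF that]]
      by (simp add: \<rho>_def)
    then show ?thesis
      using has_vector_derivative_transform_within_open assms(1,9) that
      unfolding f_def h_def by fastforce
  qed
  then have tangent: "\<forall>s\<in>I. vector_derivative \<gamma> (at s) = \<rho> s *\<^sub>R T s"
    by (blast intro: vector_derivative_at)
  have "continuous_on I (\<lambda>s. f s * kn s)"
    using df assms(6) by (intro continuous_at_imp_continuous_on ballI continuous_intros)
      (auto intro: DERIV_isCont differentiable_imp_continuous_within)
  moreover have "\<forall>s\<in>I. ((\<lambda>s. s + f s * h s) has_real_derivative 1 + f' s * h s + f s * h' s) (at s)"
    using df dh by (auto intro!: derivative_eq_intros)
  ultimately have "(\<forall>s\<in>I. \<rho> s > 0) \<or> (\<forall>s\<in>I. \<rho> s < 0)"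
    using assms(2,10) tangent
    by (intro derivative_nonzero_constant_sign)
      (auto simp: regular_curve_def \<rho>_def intro: derivative_diff_continuous_has_antiderivative)
  then show ?thesis
    using general_helix_iff_helical_curve_if_tangent_parallel tangent assms(4)
    unfolding darboux_frame_def by blast
qed

end
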